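(* Let $m\ge1$, let $f_1,\dots,f_m$ be real numbers, let $\lambda_{i0}\ge0$ for $i=1,\dots,m$, and let $\lambda_{ij}=\lambda_{ji}\ge0$ for $1\le i<j\le m$. Consider the flow network with vertex set $V=U\cup W\cup\{r,s\}$, where $U=\{u_1,\dots,u_m\}$, $W=\{w_{ij}:1\le i<j\le m\}$, $r$ is the source and $s$ the sink; directed edge set $E=\{(r,u_i)\}_{i=1}^m\cup\{(u_i,s)\}_{i=1}^m\cup\{(u_i,w_{jk}): i\in\{j,k\},\ 1\le j<k\le m\}\cup\{(w_{ij},s):1\le i<j\le m\}$; and capacities $c(r,u_i)=|f_i|$, $c(u_i,s)=\lambda_{i0}$ for $i=1,\dots,m$, $c(u_i,w_{ij})=c(u_j,w_{ij})=\lambda_{ij}$ and $c(w_{ij},s)=\lambda_{ij}$ for $1\le i<j\le m$, with $c(v,v')=0$ whenever $(v',v)\in E$ but $(v,v')\notin E$. If the maximum value of a flow from $r$ to $s$ on this network equals $\sum_{i=1}^m|f_i|$, then there exist real numbers $\xi_{i0}\in[-\lambda_{i0},\lambda_{i0}]$ for $i=1,\dots,m$ and $\xi_{ij},\xi_{ji}\in[-\lambda_{ij},\lambda_{ij}]$ for $1\le i<j\le m$ with $|\xi_{ij}|+|\xi_{ji}|\le\lambda_{ij}$, such that $$f_i+\xi_{i0}+\sum_{j\in\{1,\dots,m\}\setminus\{i\}}\xi_{ij}=0,\qquad i=1,\dots,m.$$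
   Context: A flow on a network is defined on the set of edges together with their reversals: it is a family $\tau=\{\tau_{vv'}\}$ of reals indexed by ordered pairs $(v,v')$ with $(v,v')\in E$ or $(v',v)\in E$, satisfying skew symmetry $\tau_{vv'}=-\tau_{v'v}$; capacity constraint $\tau_{vv'}\le c(v,v')$; and flow conservation $\sum_{v'}\tau_{vv'}=0$ at every vertex $v\notin\{r,s\}$. Its value is the net flow out of the source $r$; the maximum flow value is the maximum of the value over all flows. *)

theory Defs
  imports Complex_Main
begin

text \<open>A flow is a real function on ordered pairs; only the
  values on pairs (v,v') with (v,v') \<in> E or (v',v) \<in> E are relevant.\<close>

definition nbrs :: "'v set \<Rightarrow> ('v \<times> 'v) set \<Rightarrow> 'v \<Rightarrow> 'v set" where
  "nbrs V E v = {v'\<in>V. (v, v') \<in> E \<or> (v', v) \<in> E}"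

definition is_flow ::
  "'v set \<Rightarrow> ('v \<times> 'v) set \<Rightarrow> ('v \<Rightarrow> 'v \<Rightarrow> real) \<Rightarrow> 'v \<Rightarrow> 'v \<Rightarrow> ('v \<Rightarrow> 'v \<Rightarrow> real) \<Rightarrow> bool" where
  "is_flow V E c r s \<tau> \<longleftrightarrow>
     (\<forall>v v'. (v, v') \<in> E \<or> (v', v) \<in> E \<longrightarrow> \<tau> v v' = - \<tau> v' v) \<and>
     (\<forall>v v'. (v, v') \<in> E \<or> (v', v) \<in> E \<longrightarrow> \<tau> v v' \<le> c v v') \<and>
     (\<forall>v\<in>V. v \<noteq> r \<and> v \<noteq> s \<longrightarrow> (\<Sum>v'\<in>nbrs V E v. \<tau> v v') = 0)"

definition flow_value :: "'v set \<Rightarrow> ('v \<times> 'v) set \<Rightarrow> 'v \<Rightarrow> ('v \<Rightarrow> 'v \<Rightarrow> real) \<Rightarrow> real" where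
  "flow_value V E r \<tau> = (\<Sum>v'\<in>nbrs V E r. \<tau> r v')"

definition is_max_flow_value ::
  "'v set \<Rightarrow> ('v \<times> 'v) set \<Rightarrow> ('v \<Rightarrow> 'v \<Rightarrow> real) \<Rightarrow> 'v \<Rightarrow> 'v \<Rightarrow> real \<Rightarrow> bool" where
  "is_max_flow_value V E c r s x \<longleftrightarrow>
     (\<exists>\<tau>. is_flow V E c r s \<tau> \<and> flow_value V E r \<tau> = x) \<and>
     (\<forall>\<tau>. is_flow V E c r s \<tau> \<longrightarrow> flow_value V E r \<tau> \<le> x)"

datatype vtx = Src | Snk | U nat | W nat nat

definition netV :: "nat \<Rightarrow> vtx set" where
  "netV m = {Src, Snk} \<union> U ` {1..m} \<union> {W i j | i j. 1 \<le> i \<and> i < j \<and> j \<le> m}"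

definition netE :: "nat \<Rightarrow> (vtx \<times> vtx) set" where
  "netE m = {(Src, U i) | i. 1 \<le> i \<and> i \<le> m}
          \<union> {(U i, Snk) | i. 1 \<le> i \<and> i \<le> m}
          \<union> {(U i, W j k) | i j k. i \<in> {j, k} \<and> 1 \<le> j \<and> j < k \<and> k \<le> m}
          \<union> {(W i j, Snk) | i j. 1 \<le> i \<and> i < j \<and> j \<le> m}"

fun netcap :: "(nat \<Rightarrow> real) \<Rightarrow> (nat \<Rightarrow> real) \<Rightarrow> (nat \<Rightarrow> nat \<Rightarrow> real) \<Rightarrow> vtx \<Rightarrow> vtx \<Rightarrow> real" where
  "netcap f lam0 lam Src (U i) = \<bar>f i\<bar>"
| "netcap f lam0 lam (U i) Snk = lam0 i"
| "netcap f lam0 lam (U i) (W j k) = lam j k"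
| "netcap f lam0 lam (W i j) Snk = lam i j"
| "netcap f lam0 lam _ _ = 0"

end

theory Submission
  imports Defs
begin

text \<open>Take a maximum flow. Its value equals the total capacity of the source edges, so every
  edge (r, u_i) carries exactly |f_i|, and conservation at u_i splits this amount into the
  flow to s (at most lam0 i) and the flows to the vertices w_ij. Conservation and capacity at
  w_ij bound the two flows entering it by lam i j in total. Multiplying all flow amounts
  leaving u_i by - sgn f_i gives the required xi.\<close>

lemma abs_neg_sgn_mult_le: "0 \<le> (t::real) \<Longrightarrow> \<bar>- sgn x * t\<bar> \<le> t"
  by (cases "x = 0") (simp_all add: abs_mult)

lemma signed_balance_exists:
  fixes f a :: "nat \<Rightarrow> real" and g :: "nat \<Rightarrow> nat \<Rightarrow> real"
  assumes a: "\<And>i. i \<in> {1..m} \<Longrightarrow> 0 \<le> a i \<and> a i \<le> lam0 i"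
    and g: "\<And>i j. 1 \<le> i \<Longrightarrow> i < j \<Longrightarrow> j \<le> m \<Longrightarrow>
              0 \<le> g i j \<and> 0 \<le> g j i \<and> g i j + g j i \<le> lam i j"
    and balance: "\<And>i. i \<in> {1..m} \<Longrightarrow> a i + (\<Sum>j\<in>{1..m}-{i}. g i j) = \<bar>f i\<bar>"
  shows "\<exists>\<xi>0 :: nat \<Rightarrow> real. \<exists>\<xi> :: nat \<Rightarrow> nat \<Rightarrow> real.
           (\<forall>i\<in>{1..m}. - lam0 i \<le> \<xi>0 i \<and> \<xi>0 i \<le> lam0 i) \<and>
           (\<forall>i j. 1 \<le> i \<and> i < j \<and> j \<le> m \<longrightarrow>
              - lam i j \<le> \<xi> i j \<and> \<xi> i j \<le> lam i j \<and>
              - lam i j \<le> \<xi> j i \<and> \<xi> j i \<le> lam i j \<and>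
              \<bar>\<xi> i j\<bar> + \<bar>\<xi> j i\<bar> \<le> lam i j) \<and>
           (\<forall>i\<in>{1..m}. f i + \<xi>0 i + (\<Sum>j\<in>{1..m} - {i}. \<xi> i j) = 0)"
proof (intro exI conjI ballI allI impI)
  fix i assume i: "i \<in> {1..m}"
  show "- lam0 i \<le> - sgn (f i) * a i" "- sgn (f i) * a i \<le> lam0 i"
    using a[OF i] abs_neg_sgn_mult_le[of "a i" "f i"] unfolding abs_le_iff by linarith+
  have "f i + - sgn (f i) * a i + (\<Sum>j\<in>{1..m} - {i}. - sgn (f i) * g i j)
      = f i - sgn (f i) * (a i + (\<Sum>j\<in>{1..m}-{i}. g i j))"
    by (simp add: sum_negf sum_distrib_left algebra_simps)
  also have "\<dots> = 0"
    using balance[OF i] by (simp add: sgn_mult_abs)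
  finally show "f i + - sgn (f i) * a i + (\<Sum>j\<in>{1..m} - {i}. - sgn (f i) * g i j) = 0" .
next
  fix i j assume "1 \<le> i \<and> i < j \<and> j \<le> m"
  then have gij: "0 \<le> g i j" "0 \<le> g j i" "g i j + g j i \<le> lam i j"
    using g by auto
  have "\<bar>- sgn (f i) * g i j\<bar> \<le> g i j" "\<bar>- sgn (f j) * g j i\<bar> \<le> g j i"
    using gij abs_neg_sgn_mult_le by auto
  with gij show
    "- lam i j \<le> - sgn (f i) * g i j" "- sgn (f i) * g i j \<le> lam i j"
    "- lam i j \<le> - sgn (f j) * g j i" "- sgn (f j) * g j i \<le> lam i j"
    "\<bar>- sgn (f i) * g i j\<bar> + \<bar>- sgn (f j) * g j i\<bar> \<le> lam i j"
    unfolding abs_le_iff by linarith+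
qed

definition Wsym :: "nat \<Rightarrow> nat \<Rightarrow> vtx" where
  "Wsym i j = W (min i j) (max i j)"

lemma nbrs_netV_Src: "nbrs (netV m) (netE m) Src = U ` {1..m}"
  by (auto simp add: nbrs_def netV_def netE_def)

lemma nbrs_netV_U:
  assumes "i \<in> {1..m}"
  shows "nbrs (netV m) (netE m) (U i) = insert Src (insert Snk (Wsym i ` ({1..m}-{i})))"
proof (rule set_eqI, rule iffI)
  fix x assume "x \<in> nbrs (netV m) (netE m) (U i)"
  then show "x \<in> insert Src (insert Snk (Wsym i ` ({1..m}-{i})))"
    using assms
    by (auto simp add: nbrs_def netV_def netE_def Wsym_def image_iff)
       (metis Diff_iff atLeastAtMost_iff less_imp_le_nat linorder_not_le min.absorb1
          min.absorb2 singletonD order.trans)+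
next
  fix x assume "x \<in> insert Src (insert Snk (Wsym i ` ({1..m}-{i})))"
  then show "x \<in> nbrs (netV m) (netE m) (U i)"
    using assms by (auto simp add: nbrs_def netV_def netE_def Wsym_def min_def max_def)
qed

lemma nbrs_netV_W:
  assumes "1 \<le> i" "i < j" "j \<le> m"
  shows "nbrs (netV m) (netE m) (W i j) = {U i, U j, Snk}"
  using assms by (auto simp add: nbrs_def netV_def netE_def)

lemma inj_on_Wsym: "inj_on (Wsym i) (A - {i})"
  by (auto simp add: inj_on_def Wsym_def min_def max_def split: if_splits)

context
  fixes m :: nat and f lam0 :: "nat \<Rightarrow> real" and lam :: "nat \<Rightarrow> nat \<Rightarrow> real"
    and \<tau> :: "vtx \<Rightarrow> vtx \<Rightarrow> real"
  assumes flow: "is_flow (netV m) (netE m) (netcap f lam0 lam) Src Snk \<tau>"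
begin

private lemma skew: "(v, v') \<in> netE m \<or> (v', v) \<in> netE m \<Longrightarrow> \<tau> v v' = - \<tau> v' v"
  and cap: "(v, v') \<in> netE m \<or> (v', v) \<in> netE m \<Longrightarrow> \<tau> v v' \<le> netcap f lam0 lam v v'"
  and conservation: "v \<in> netV m \<Longrightarrow> v \<noteq> Src \<Longrightarrow> v \<noteq> Snk \<Longrightarrow>
         (\<Sum>v'\<in>nbrs (netV m) (netE m) v. \<tau> v v') = 0"
  using flow unfolding is_flow_def by blast+

lemma flow_value_netV: "flow_value (netV m) (netE m) Src \<tau> = (\<Sum>i=1..m. \<tau> Src (U i))"
  unfolding flow_value_def nbrs_netV_Src by (subst sum.reindex) (auto simp: inj_on_def)

lemma flow_Src_U_le: "i \<in> {1..m} \<Longrightarrow> \<tau> Src (U i) \<le> \<bar>f i\<bar>"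
  using cap[of Src "U i"] by (auto simp: netE_def)

lemma flow_Src_U_saturated:
  assumes "flow_value (netV m) (netE m) Src \<tau> = (\<Sum>i=1..m. \<bar>f i\<bar>)" and "i \<in> {1..m}"
  shows "\<tau> Src (U i) = \<bar>f i\<bar>"
proof (rule ccontr)
  assume "\<tau> Src (U i) \<noteq> \<bar>f i\<bar>"
  with flow_Src_U_le[OF assms(2)] have "\<tau> Src (U i) < \<bar>f i\<bar>" by simp
  then have "(\<Sum>j=1..m. \<tau> Src (U j)) < (\<Sum>j=1..m. \<bar>f j\<bar>)"
    using flow_Src_U_le assms(2) by (intro sum_strict_mono_ex1) auto
  with assms(1) show False by (simp add: flow_value_netV)
qed

lemma flow_U_Snk_bounds:
  assumes "i \<in> {1..m}"
  shows "0 \<le> \<tau> (U i) Snk \<and> \<tau> (U i) Snk \<le> lam0 i"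
proof -
  have e: "(U i, Snk) \<in> netE m" using assms by (auto simp: netE_def)
  then show ?thesis using cap[of Snk "U i"] cap[of "U i" Snk] skew[of "U i" Snk] by auto
qed

lemma flow_into_W_bounds:
  assumes ij: "1 \<le> i" "i < j" "j \<le> m"
  shows "0 \<le> \<tau> (U i) (W i j) \<and> 0 \<le> \<tau> (U j) (W i j) \<and>
         \<tau> (U i) (W i j) + \<tau> (U j) (W i j) \<le> lam i j"
proof -
  have e: "(U i, W i j) \<in> netE m" "(U j, W i j) \<in> netE m" "(W i j, Snk) \<in> netE m"
    using ij by (auto simp: netE_def)
  have "W i j \<in> netV m" using ij by (auto simp: netV_def)
  then have "(\<Sum>v'\<in>{U i, U j, Snk}. \<tau> (W i j) v') = 0"
    using conservation[of "W i j"] nbrs_netV_W[OF ij] by simp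
  then have "\<tau> (W i j) (U i) + \<tau> (W i j) (U j) + \<tau> (W i j) Snk = 0"
    using ij by simp
  moreover have "\<tau> (W i j) (U i) \<le> 0" "\<tau> (W i j) (U j) \<le> 0" "\<tau> (W i j) Snk \<le> lam i j"
    using cap[of "W i j" "U i"] cap[of "W i j" "U j"] cap[of "W i j" Snk] e by auto
  ultimately show ?thesis
    using skew[of "U i" "W i j"] skew[of "U j" "W i j"] e by auto
qed

lemma flow_conservation_U:
  assumes i: "i \<in> {1..m}"
  shows "\<tau> (U i) Snk + (\<Sum>j\<in>{1..m}-{i}. \<tau> (U i) (Wsym i j)) = \<tau> Src (U i)"
proof -
  have "U i \<in> netV m" using i by (auto simp: netV_def)
  then have "0 = (\<Sum>v'\<in>nbrs (netV m) (netE m) (U i). \<tau> (U i) v')"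
    using conservation by simp
  also have "\<dots> = \<tau> (U i) Src + \<tau> (U i) Snk + (\<Sum>j\<in>{1..m}-{i}. \<tau> (U i) (Wsym i j))"
    unfolding nbrs_netV_U[OF i]
    using sum.reindex[OF inj_on_Wsym, of "\<tau> (U i)" i "{1..m}"]
    by (simp add: image_iff add.assoc o_def Wsym_def)
  finally show ?thesis
    using skew[of "U i" Src] i by (auto simp: netE_def)
qed

end

theorem lemma2:
  fixes m :: nat and f lam0 :: "nat \<Rightarrow> real" and lam :: "nat \<Rightarrow> nat \<Rightarrow> real"
  assumes "m \<ge> 1"
    and "\<forall>i\<in>{1..m}. lam0 i \<ge> 0"
    and "\<forall>i j. 1 \<le> i \<and> i < j \<and> j \<le> m \<longrightarrow> lam i j = lam j i \<and> lam i j \<ge> 0"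
    and "is_max_flow_value (netV m) (netE m) (netcap f lam0 lam) Src Snk (\<Sum>i=1..m. \<bar>f i\<bar>)"
  shows "\<exists>\<xi>0 :: nat \<Rightarrow> real. \<exists>\<xi> :: nat \<Rightarrow> nat \<Rightarrow> real.
           (\<forall>i\<in>{1..m}. - lam0 i \<le> \<xi>0 i \<and> \<xi>0 i \<le> lam0 i) \<and>
           (\<forall>i j. 1 \<le> i \<and> i < j \<and> j \<le> m \<longrightarrow>
              - lam i j \<le> \<xi> i j \<and> \<xi> i j \<le> lam i j \<and>
              - lam i j \<le> \<xi> j i \<and> \<xi> j i \<le> lam i j \<and>
              \<bar>\<xi> i j\<bar> + \<bar>\<xi> j i\<bar> \<le> lam i j) \<and>
           (\<forall>i\<in>{1..m}. f i + \<xi>0 i + (\<Sum>j\<in>{1..m} - {i}. \<xi> i j) = 0)"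
proof -
  obtain \<tau> where flow: "is_flow (netV m) (netE m) (netcap f lam0 lam) Src Snk \<tau>"
    and saturating: "flow_value (netV m) (netE m) Src \<tau> = (\<Sum>i=1..m. \<bar>f i\<bar>)"
    using assms(4) unfolding is_max_flow_value_def by blast
  show ?thesis
  proof (rule signed_balance_exists)
    show "0 \<le> \<tau> (U i) Snk \<and> \<tau> (U i) Snk \<le> lam0 i" if "i \<in> {1..m}" for i
      using flow_U_Snk_bounds[OF flow that] .
    show "0 \<le> \<tau> (U i) (Wsym i j) \<and> 0 \<le> \<tau> (U j) (Wsym j i) \<and>
          \<tau> (U i) (Wsym i j) + \<tau> (U j) (Wsym j i) \<le> lam i j"
      if "1 \<le> i" "i < j" "j \<le> m" for i j
      using flow_into_W_bounds[OF flow that] that by (simp add: Wsym_def)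
    show "\<tau> (U i) Snk + (\<Sum>j\<in>{1..m}-{i}. \<tau> (U i) (Wsym i j)) = \<bar>f i\<bar>"
      if "i \<in> {1..m}" for i
      using flow_conservation_U[OF flow that] flow_Src_U_saturated[OF flow saturating that]
      by simp
  qed
qed

end
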